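(* Let $q\geq 7$ be an odd prime power, $m\geq 2$ and $n=\frac{q^m-1}{2}$. Then the negacyclic BCH code $\mathcal{C}_{(q,n,3,0)}$, whose generator polynomial is $\mathbb{M}_{\beta}(x)\mathbb{M}_{\beta^3}(x)$, has parameters $[n,n-2m,3]$ and is almost distance-optimal with respect to the sphere-packing bound.
   Context: Let $\ell$ be the order of $q$ modulo $2n$, $\alpha$ a primitive element of $\mathrm{GF}(q^\ell)$, $\beta=\alpha^{(q^\ell-1)/(2n)}$ (a primitive $2n$-th root of unity), and $\mathbb{M}_{\beta^j}(x)$ the minimal polynomial of $\beta^j$ over $\mathrm{GF}(q)$. $\mathcal{C}_{(q,n,3,0)}$ is the negacyclic code of length $n$ over $\mathrm{GF}(q)$, i.e. the ideal of $\mathrm{GF}(q)[x]/(x^n+1)$ generated by $\mathrm{lcm}(\mathbb{M}_{\beta}(x),\mathbb{M}_{\beta^3}(x))$. An $[n,k,d]$ code over $\mathrm{GF}(q)$ is almost distance-optimal with respect to the sphere-packing bound if the sphere-packing bound shows that every $[n,k]$ linear code over $\mathrm{GF}(q)$ has minimum distance at most $d+1$. *)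

theory Defs
  imports "HOL-Computational_Algebra.Polynomial_Factorial" "HOL-Computational_Algebra.Euclidean_Algorithm" "HOL-Number_Theory.Pocklington"
begin

definition field_embedding :: "('a::field \<Rightarrow> 'b::field) \<Rightarrow> bool" where
  "field_embedding \<phi> \<longleftrightarrow> inj \<phi> \<and> \<phi> 0 = 0 \<and> \<phi> 1 = 1 \<and>
     (\<forall>x y. \<phi> (x + y) = \<phi> x + \<phi> y) \<and> (\<forall>x y. \<phi> (x * y) = \<phi> x * \<phi> y)"

definition primitive_element :: "'b::{finite,field} \<Rightarrow> bool" where
  "primitive_element \<alpha> \<longleftrightarrow> {\<alpha> ^ k | k. True} = UNIV - {0}"

definition min_poly :: "('a::field \<Rightarrow> 'b::field) \<Rightarrow> 'b \<Rightarrow> 'a poly" where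
  "min_poly \<phi> b = (THE p. lead_coeff p = 1 \<and> poly (map_poly \<phi> p) b = 0 \<and>
      (\<forall>r. poly (map_poly \<phi> r) b = 0 \<longrightarrow> p dvd r))"

text \<open>The cyclic-type (negacyclic) code of length n generated by g: the ideal of
  'a[x]/(x^n+1) generated by g, represented by reduced polynomials of degree < n.\<close>
definition negacyclic_code :: "nat \<Rightarrow> 'a::field poly \<Rightarrow> 'a poly set" where
  "negacyclic_code n g = {(f * g) mod (Polynomial.monom 1 n + 1) | f. True}"

definition hamming_weight :: "'a::zero poly \<Rightarrow> nat" where
  "hamming_weight c = card {i. Polynomial.coeff c i \<noteq> 0}"

definition min_distance :: "'a::zero poly set \<Rightarrow> nat" where
  "min_distance C = Inf {hamming_weight c | c. c \<in> C \<and> c \<noteq> 0}"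

definition code_dim :: "'a::field poly set \<Rightarrow> nat" where
  "code_dim C = vector_space.dim (Polynomial.smult :: 'a \<Rightarrow> 'a poly \<Rightarrow> 'a poly) C"

definition sphere_packing_bound_holds :: "nat \<Rightarrow> nat \<Rightarrow> nat \<Rightarrow> nat \<Rightarrow> bool" where
  "sphere_packing_bound_holds q n k d \<longleftrightarrow>
     q ^ k * (\<Sum>i\<le>(d - 1) div 2. (n choose i) * (q - 1) ^ i) \<le> q ^ n"

definition almost_dist_opt_sphere_packing :: "nat \<Rightarrow> nat \<Rightarrow> nat \<Rightarrow> nat \<Rightarrow> bool" where
  "almost_dist_opt_sphere_packing q n k d \<longleftrightarrow>
     (\<forall>d'. sphere_packing_bound_holds q n k d' \<longrightarrow> d' \<le> d + 1)"

end

theory Submission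
  imports Defs
begin

text \<open>
  Since \<open>2n = q^m - 1\<close>, the order of \<open>q\<close> modulo \<open>2n\<close> is \<open>m\<close>, so the extension field is
  \<open>GF(q^m)\<close> and \<open>\<beta> = \<alpha>\<close> is primitive. As \<open>q \<ge> 7\<close>, the exponents \<open>q^d\<close> and \<open>3 q^d\<close>
  (\<open>0 < d < m\<close>) stay below \<open>q^m - 1\<close>, so \<open>\<alpha>\<close> and \<open>\<alpha>^3\<close> have disjoint Frobenius orbits of
  length \<open>m\<close>. Hence both minimal polynomials are the products of \<open>x - b\<close> over these orbits;
  they have degree \<open>m\<close> and are coprime, so the generator has degree \<open>2m\<close> and the code has
  dimension \<open>n - 2m\<close>.

  A nonzero codeword \<open>a x^i + b x^j\<close> vanishing at \<open>\<alpha>\<close> and \<open>\<alpha>^3\<close> would force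
  \<open>\<alpha>^(2i) = \<alpha>^(2j)\<close> with \<open>i \<noteq> j < n\<close>, impossible as \<open>\<alpha>^2\<close> has order \<open>n\<close>; so the minimum
  distance is at least 3. Since \<open>\<alpha>^n = -1\<close>, for every nonzero \<open>s \<in> GF(q)\<close> one of \<open>s, -s\<close>
  equals some \<open>\<alpha>^i\<close> with \<open>i < n\<close>. Taking three such elements \<open>t\<^sub>k = \<alpha>^(i\<^sub>k)\<close> with distinct
  squares (possible as \<open>q \<ge> 7\<close>), the word \<open>\<Sum> c\<^sub>k x^(i\<^sub>k)\<close> with
  \<open>c\<^sub>k t\<^sub>k = t\<^sub>k\<^sub>+\<^sub>1\<^sup>2 - t\<^sub>k\<^sub>+\<^sub>2\<^sup>2\<close> vanishes at \<open>\<alpha>\<close> and \<open>\<alpha>^3\<close> and has weight 3.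
  Finally, an \<open>[n, n - 2m, 5]\<close> code would violate the sphere-packing bound, because
  \<open>(n choose 2) (q - 1)^2 > q^(2m) = (2n + 1)^2\<close>.
\<close>

section \<open>Field homomorphisms\<close>

locale field_hom =
  fixes h :: "'a::field \<Rightarrow> 'b::field"
  assumes hom_add: "h (x + y) = h x + h y"
    and hom_mult: "h (x * y) = h x * h y"
    and hom_one: "h 1 = 1"
begin

lemma hom_zero [simp]: "h 0 = 0"
  using hom_add[of 0 0] by (metis add_cancel_left_left)

lemma hom_uminus: "h (- x) = - h x"
  using hom_add[of x "- x"] by (metis hom_zero add.right_inverse neg_eq_iff_add_eq_0)

lemma hom_diff: "h (x - y) = h x - h y"
  using hom_add[of x "- y"] by (simp add: hom_uminus)

lemma hom_power: "h (x ^ k) = h x ^ k"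
  by (induction k) (simp_all add: hom_one hom_mult)

lemma hom_of_nat: "h (of_nat k) = of_nat k"
  by (induction k) (simp_all add: hom_one hom_add)

lemma hom_eq_0_iff [simp]: "h x = 0 \<longleftrightarrow> x = 0"
proof
  assume "h x = 0"
  show "x = 0"
  proof (rule ccontr)
    assume "x \<noteq> 0"
    then have "h x * h (inverse x) = 1"
      by (simp flip: hom_mult add: hom_one)
    with \<open>h x = 0\<close> show False by simp
  qed
qed simp

lemma inj: "inj h"
  by (rule injI) (metis hom_diff hom_eq_0_iff right_minus_eq)

lemma CHAR_eq: "CHAR('b) = CHAR('a)"
  by (rule CHAR_eqI) (auto simp flip: hom_of_nat simp: of_nat_eq_0_iff_char_dvd)

lemma map_poly_add: "map_poly h (p + r) = map_poly h p + map_poly h r"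
  by (intro poly_eqI) (simp add: coeff_map_poly hom_add)

lemma map_poly_mult: "map_poly h (p * r) = map_poly h p * map_poly h r"
proof (induction p)
  case (pCons a p)
  then show ?case
    by (simp add: map_poly_pCons map_poly_add map_poly_smult hom_mult)
qed simp

lemma map_poly_prod: "map_poly h (prod f A) = (\<Prod>a\<in>A. map_poly h (f a))"
  by (induction A rule: infinite_finite_induct) (simp_all add: hom_one map_poly_mult)

lemma poly_map_poly: "poly (map_poly h p) (h x) = h (poly p x)"
  by (induction p) (simp_all add: map_poly_pCons hom_add hom_mult)

lemma degree_map_poly_eq [simp]: "degree (map_poly h p) = degree p"
  by (simp add: degree_map_poly)

lemma map_poly_dvd_iff: "map_poly h p dvd map_poly h r \<longleftrightarrow> p dvd r"
proof
  assume dvd: "map_poly h p dvd map_poly h r"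
  have "map_poly h r = map_poly h p * map_poly h (r div p) + map_poly h (r mod p)"
    by (metis div_mult_mod_eq map_poly_add map_poly_mult mult.commute)
  with dvd have "map_poly h p dvd map_poly h (r mod p)"
    by (metis dvd_add_right_iff dvd_triv_left)
  then show "p dvd r"
    by (metis degree_map_poly_eq degree_mod_less' dvd_imp_degree_le
        map_poly_eq_0_iff hom_eq_0_iff hom_zero not_le mod_by_0 mod_eq_0_iff_dvd)
qed (auto simp: map_poly_mult)

end

lemma field_embedding_imp_field_hom: "field_embedding \<phi> \<Longrightarrow> field_hom \<phi>"
  unfolding field_embedding_def by unfold_locales auto

lemma frobenius_field_hom:
  assumes "prime CHAR('b::field)" "q = CHAR('b) ^ k"
  shows "field_hom (\<lambda>y::'b. y ^ q)"
  by unfold_locales (simp_all add: assms freshmans_dream' power_mult_distrib)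

section \<open>Finite fields\<close>

text \<open>
  The library's \<open>finite_field_power_card_eq_same\<close> needs the sort \<open>finite_field\<close>, which
  \<open>{finite, field}\<close> does not entail; hence the direct proof.
\<close>

lemma finite_field_power_card_minus_one:
  fixes x :: "'a::{finite,field}"
  assumes "x \<noteq> 0"
  shows "x ^ (card (UNIV :: 'a set) - 1) = 1"
proof -
  let ?U = "UNIV - {0 :: 'a}"
  have "(\<Prod>y\<in>?U. x * y) = \<Prod>?U"
    by (rule prod.reindex_bij_witness[of _ "\<lambda>y. y / x" "\<lambda>y. x * y"]) (use assms in auto)
  moreover have "(\<Prod>y\<in>?U. x * y) = x ^ (card (UNIV :: 'a set) - 1) * \<Prod>?U"
    by (simp add: prod.distrib card_Diff_singleton)
  moreover have "\<Prod>?U \<noteq> 0"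
    by simp
  ultimately show ?thesis
    by simp
qed

lemma finite_field_power_card:
  fixes x :: "'a::{finite,field}"
  shows "x ^ card (UNIV :: 'a set) = x"
proof (cases "x = 0")
  case False
  have "card (UNIV :: 'a set) = Suc (card (UNIV :: 'a set) - 1)"
    using finite_UNIV_card_ge_0[where 'a='a] by simp
  then show ?thesis
    by (metis False finite_field_power_card_minus_one mult.right_neutral power_Suc)
qed (simp add: finite_UNIV_card_ge_0)

lemma CHAR_eq_of_card_prime_power:
  assumes "card (UNIV :: 'a::{finite,field} set) = p ^ k" "prime p" "k > 0"
  shows "CHAR('a) = p"
proof -
  have "prime CHAR('a)"
    by (simp add: finite_imp_CHAR_pos prime_CHAR_semidom)
  moreover have "CHAR('a) dvd p"
    using CHAR_dvd_CARD[where 'a='a] assms \<open>prime CHAR('a)\<close> prime_dvd_power by metis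
  ultimately show ?thesis
    using assms(2) primes_dvd_imp_eq by blast
qed

lemma field_hom_range_eq_power_fixed_points:
  fixes h :: "'a::{finite,field} \<Rightarrow> 'b::field"
  assumes "field_hom h" "card (UNIV :: 'a set) = q"
  shows "range h = {y. y ^ q = y}"
proof (rule card_subset_eq)
  interpret field_hom h by fact
  define P :: "'b poly" where "P = Polynomial.monom 1 q + [:0, -1:]"
  have "q \<ge> 2"
    using assms card_mono[of UNIV "{0::'a, 1}"] by simp
  then have "degree P = q"
    by (simp add: P_def degree_add_eq_left degree_monom_eq)
  with \<open>q \<ge> 2\<close> have "P \<noteq> 0"
    by auto
  have roots: "{y. poly P y = 0} = {y. y ^ q = y}"
    by (auto simp: P_def poly_monom)
  show fin: "finite {y::'b. y ^ q = y}"
    using poly_roots_finite[OF \<open>P \<noteq> 0\<close>] roots by simp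
  show sub: "range h \<subseteq> {y. y ^ q = y}"
    using assms by (auto simp flip: hom_power simp: finite_field_power_card)
  have "card {y::'b. y ^ q = y} \<le> q"
    using card_poly_roots_bound[OF \<open>P \<noteq> 0\<close>] roots \<open>degree P = q\<close> by simp
  moreover have "card (range h) = q"
    by (simp add: card_image inj assms)
  ultimately show "card (range h) = card {y::'b. y ^ q = y}"
    using card_mono[OF fin sub] by simp
qed

lemma primitive_element_power_eq_iff:
  fixes \<alpha> :: "'b::{finite,field}"
  assumes "primitive_element \<alpha>"
  shows "\<alpha> ^ i = \<alpha> ^ j \<longleftrightarrow> [i = j] (mod (card (UNIV :: 'b set) - 1))"
proof -
  define N where "N = card (UNIV :: 'b set) - 1"
  have powers: "range (\<lambda>k. \<alpha> ^ k) = UNIV - {0}"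
    using assms unfolding primitive_element_def by auto
  then have "\<alpha> \<noteq> 0"
    by (metis Diff_iff power_one_right rangeI singletonI)
  then have "\<alpha> ^ N = 1"
    unfolding N_def by (rule finite_field_power_card_minus_one)
  then have reduce: "\<alpha> ^ k = \<alpha> ^ (k mod N)" for k
    by (metis div_mult_mod_eq mult.commute power_add power_mult power_one mult_1)
  have "N > 0"
    using card_mono[of UNIV "{0::'b, 1}"] unfolding N_def by simp
  have image: "(\<lambda>k. \<alpha> ^ k) ` {..<N} = UNIV - {0}"
  proof
    show "UNIV - {0} \<subseteq> (\<lambda>k. \<alpha> ^ k) ` {..<N}"
    proof
      fix y :: 'b
      assume "y \<in> UNIV - {0}"
      then obtain k where "y = \<alpha> ^ k"
        using powers by blast
      then have "y = \<alpha> ^ (k mod N)" "k mod N < N"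
        using reduce \<open>N > 0\<close> by simp_all
      then show "y \<in> (\<lambda>k. \<alpha> ^ k) ` {..<N}"
        by blast
    qed
  qed (use \<open>\<alpha> \<noteq> 0\<close> in auto)
  have "card ((\<lambda>k. \<alpha> ^ k) ` {..<N}) = card {..<N}"
    unfolding image by (simp add: card_Diff_singleton N_def)
  then have "inj_on (\<lambda>k. \<alpha> ^ k) {..<N}"
    by (simp add: eq_card_imp_inj_on)
  with \<open>N > 0\<close> show ?thesis
    unfolding N_def[symmetric] cong_def
    by (metis reduce inj_onD lessThan_iff mod_less_divisor)
qed

section \<open>Minimal polynomials and Frobenius orbits\<close>

definition is_min_poly :: "('a::field \<Rightarrow> 'b::field) \<Rightarrow> 'b \<Rightarrow> 'a poly \<Rightarrow> bool" where
  "is_min_poly \<phi> b p \<longleftrightarrow> lead_coeff p = 1 \<and> poly (map_poly \<phi> p) b = 0 \<and>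
     (\<forall>r. poly (map_poly \<phi> r) b = 0 \<longrightarrow> p dvd r)"

lemma min_poly_eqI:
  fixes \<phi> :: "'a::field_gcd \<Rightarrow> 'b::field"
  assumes "is_min_poly \<phi> b p"
  shows "min_poly \<phi> b = p"
  unfolding min_poly_def is_min_poly_def[symmetric]
proof (rule the_equality)
  fix r
  assume "is_min_poly \<phi> b r"
  with assms have "r dvd p" "p dvd r" "normalize p = p" "normalize r = r"
    by (auto simp: is_min_poly_def normalize_poly_eq_map_poly map_poly_idI)
  then show "r = p"
    by (metis associated_eqI)
qed fact

lemma is_min_poly_prime_elem:
  assumes "field_hom \<phi>" "is_min_poly \<phi> b p"
  shows "prime_elem p"
proof (rule prime_elemI)
  interpret field_hom \<phi> by fact
  show "p \<noteq> 0"
    using assms(2) by (auto simp: is_min_poly_def)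
  show "\<not> is_unit p"
    using assms(2) by (auto simp: is_min_poly_def is_unit_poly_iff map_poly_pCons hom_one)
  fix r s
  assume "p dvd r * s"
  then obtain t where "r * s = p * t"
    by (elim dvdE)
  then have "poly (map_poly \<phi> (r * s)) b = poly (map_poly \<phi> (p * t)) b"
    by simp
  then have "poly (map_poly \<phi> r) b = 0 \<or> poly (map_poly \<phi> s) b = 0"
    using assms(2) by (simp add: is_min_poly_def map_poly_mult)
  then show "p dvd r \<or> p dvd s"
    using assms(2) by (auto simp: is_min_poly_def)
qed

lemma is_min_poly_coprime:
  fixes \<phi> :: "'a::field_gcd \<Rightarrow> 'b::field"
  assumes "field_hom \<phi>" "is_min_poly \<phi> b p" "poly (map_poly \<phi> r) b \<noteq> 0"
  shows "coprime p r"
proof (rule prime_elem_imp_coprime)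
  interpret field_hom \<phi> by fact
  show "prime_elem p"
    using assms(1,2) by (rule is_min_poly_prime_elem)
  show "\<not> p dvd r"
    using assms(2,3) by (auto simp: is_min_poly_def map_poly_mult elim: dvdE)
qed

definition orbit_poly :: "nat \<Rightarrow> nat \<Rightarrow> 'b::comm_ring_1 \<Rightarrow> 'b poly" where
  "orbit_poly q k b = (\<Prod>i<k. [:- (b ^ q ^ i), 1:])"

lemma degree_orbit_poly: "degree (orbit_poly q k (b::'b::field)) = k"
  unfolding orbit_poly_def by (subst degree_prod_sum_eq) auto

lemma lead_coeff_orbit_poly: "lead_coeff (orbit_poly q k (b::'b::field)) = 1"
  unfolding orbit_poly_def by (simp add: lead_coeff_prod)

lemma poly_orbit_poly: "poly (orbit_poly q k b) x = (\<Prod>i<k. x - b ^ q ^ i)"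
  unfolding orbit_poly_def by (simp add: poly_prod)

lemma prod_lessThan_Suc_cyclic:
  assumes "f k = f 0"
  shows "(\<Prod>i<k. f (Suc i)) = (\<Prod>i<k. f i :: 'a::comm_monoid_mult)"
proof (cases k)
  case (Suc k')
  have "(\<Prod>i<Suc k'. f (Suc i)) = (\<Prod>i<k'. f (Suc i)) * f (Suc k')"
    by (rule prod.lessThan_Suc)
  also have "\<dots> = f 0 * (\<Prod>i<k'. f (Suc i))"
    using assms Suc by (simp add: mult.commute)
  also have "\<dots> = (\<Prod>i<Suc k'. f i)"
    by (rule prod.lessThan_Suc_shift [symmetric])
  finally show ?thesis
    using Suc by simp
qed simp

lemma orbit_poly_frobenius_fixed:
  fixes b :: "'b::field"
  assumes "field_hom (\<lambda>y::'b. y ^ q)" "b ^ q ^ k = b"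
  shows "map_poly (\<lambda>y. y ^ q) (orbit_poly q k b) = orbit_poly q k b"
proof -
  interpret frob: field_hom "\<lambda>y::'b. y ^ q" by fact
  have "map_poly (\<lambda>y. y ^ q) (orbit_poly q k b) = (\<Prod>i<k. map_poly (\<lambda>y. y ^ q) [:- (b ^ q ^ i), 1:])"
    unfolding orbit_poly_def by (rule frob.map_poly_prod)
  also have "\<dots> = (\<Prod>i<k. [:- (b ^ q ^ Suc i), 1:])"
    by (simp add: map_poly_pCons frob.hom_uminus power_mult [symmetric] mult.commute)
  also have "\<dots> = orbit_poly q k b"
    unfolding orbit_poly_def by (rule prod_lessThan_Suc_cyclic) (simp add: assms(2))
  finally show ?thesis .
qed

lemma orbit_inj_on:
  fixes b :: "'b::monoid_mult"
  assumes "b ^ q ^ k = b" "\<And>d. 0 < d \<Longrightarrow> d < k \<Longrightarrow> b ^ q ^ d \<noteq> b"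
  shows "inj_on (\<lambda>i. b ^ q ^ i) {..<k}"
proof -
  have neq: "b ^ q ^ i \<noteq> b ^ q ^ j" if "i < j" "j < k" for i j
  proof
    assume "b ^ q ^ i = b ^ q ^ j"
    then have "(b ^ q ^ i) ^ q ^ (k - j) = (b ^ q ^ j) ^ q ^ (k - j)"
      by simp
    moreover have "(b ^ q ^ a) ^ q ^ c = b ^ q ^ (a + c)" for a c
      by (simp add: power_mult [symmetric] power_add)
    ultimately have "b ^ q ^ (i + (k - j)) = b"
      using that assms(1) by simp
    with assms(2)[of "i + (k - j)"] that show False
      by simp
  qed
  show ?thesis
  proof (rule inj_onI)
    fix i j
    assume "i \<in> {..<k}" "j \<in> {..<k}" "b ^ q ^ i = b ^ q ^ j"
    then show "i = j"
      using neq[of i j] neq[of j i] by (cases i j rule: linorder_cases) auto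
  qed
qed

lemma prod_linear_dvd:
  fixes R :: "'b::field poly"
  assumes "finite A" "\<And>a. a \<in> A \<Longrightarrow> poly R a = 0"
  shows "(\<Prod>a\<in>A. [:- a, 1:]) dvd R"
  using assms
proof (induction A arbitrary: R rule: finite_induct)
  case (insert a A)
  then obtain S where S: "R = [:- a, 1:] * S"
    by (meson insertI1 poly_eq_0_iff_dvd dvdE)
  have "poly S x = 0" if "x \<in> A" for x
    using insert.prems[of x] insert.hyps(2) that by (auto simp: S)
  then have "(\<Prod>a\<in>A. [:- a, 1:]) dvd S"
    by (rule insert.IH)
  then show ?case
    unfolding prod.insert[OF insert.hyps] S by (rule mult_dvd_mono[OF dvd_refl])
qed simp

lemma exists_map_poly_preimage:
  assumes "field_hom h" "\<And>i. Polynomial.coeff P i \<in> range h"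
  shows "\<exists>M. map_poly h M = P"
proof
  interpret field_hom h by fact
  show "map_poly h (map_poly (inv_into UNIV h) P) = P"
    by (intro poly_eqI) (simp add: coeff_map_poly inv_f_eq inj f_inv_into_f[OF assms(2)])
qed

lemma orbit_poly_dvd:
  fixes R :: "'b::field poly"
  assumes "inj_on (\<lambda>i. b ^ q ^ i) {..<k}" "\<And>i. i < k \<Longrightarrow> poly R (b ^ q ^ i) = 0"
  shows "orbit_poly q k b dvd R"
proof -
  have "orbit_poly q k b = (\<Prod>a\<in>(\<lambda>i. b ^ q ^ i) ` {..<k}. [:- a, 1:])"
    unfolding orbit_poly_def by (simp add: prod.reindex[OF assms(1)])
  also have "\<dots> dvd R"
    by (rule prod_linear_dvd) (use assms(2) in auto)
  finally show ?thesis .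
qed

lemma frobenius_fixed_poly_root_power:
  fixes R :: "'b::field poly"
  assumes "field_hom (\<lambda>y::'b. y ^ q)" "map_poly (\<lambda>y. y ^ q) R = R" "poly R x = 0"
  shows "poly R (x ^ q ^ i) = 0"
proof (induction i)
  case (Suc i)
  interpret frob: field_hom "\<lambda>y::'b. y ^ q" by fact
  have "poly R (x ^ q ^ Suc i) = poly (map_poly (\<lambda>y. y ^ q) R) ((x ^ q ^ i) ^ q)"
    by (simp add: assms(2) power_mult [symmetric] mult.commute)
  also have "\<dots> = 0"
    by (simp add: frob.poly_map_poly Suc)
  finally show ?case .
qed (simp add: assms(3))

lemma is_min_poly_orbit_preimage:
  fixes \<phi> :: "'a::{finite,field} \<Rightarrow> 'b::field"
  assumes \<phi>: "field_hom \<phi>" and frob: "field_hom (\<lambda>y::'b. y ^ q)"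
    and card: "card (UNIV :: 'a set) = q"
    and period: "b ^ q ^ k = b" and minimal: "\<And>d. 0 < d \<Longrightarrow> d < k \<Longrightarrow> b ^ q ^ d \<noteq> b"
    and "0 < k" and M: "map_poly \<phi> M = orbit_poly q k b"
  shows "is_min_poly \<phi> b M"
  unfolding is_min_poly_def
proof (intro conjI allI impI)
  interpret field_hom \<phi> by fact
  have "\<phi> (lead_coeff M) = lead_coeff (orbit_poly q k b)"
    by (simp flip: M add: coeff_map_poly)
  then show "lead_coeff M = 1"
    using inj by (simp add: lead_coeff_orbit_poly hom_one[symmetric] inj_eq)
  show "poly (map_poly \<phi> M) b = 0"
    using \<open>0 < k\<close> by (auto simp: M poly_orbit_poly intro!: bexI[of _ 0])
  fix r
  assume root: "poly (map_poly \<phi> r) b = 0"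
  have "\<phi> x ^ q = \<phi> x" for x
    using field_hom_range_eq_power_fixed_points[OF \<phi> card] by blast
  then have "map_poly (\<lambda>y. y ^ q) (map_poly \<phi> r) = map_poly \<phi> r"
    by (simp add: map_poly_map_poly comp_def field_hom.hom_zero[OF frob])
  with root have "orbit_poly q k b dvd map_poly \<phi> r"
    using orbit_inj_on[OF period minimal] frobenius_fixed_poly_root_power[OF frob]
    by (blast intro: orbit_poly_dvd)
  then show "M dvd r"
    by (simp flip: M add: map_poly_dvd_iff)
qed

lemma min_poly_orbit:
  fixes \<phi> :: "'a::{finite,field_gcd} \<Rightarrow> 'b::field"
  assumes \<phi>: "field_hom \<phi>" and frob: "field_hom (\<lambda>y::'b. y ^ q)"
    and card: "card (UNIV :: 'a set) = q"
    and period: "b ^ q ^ k = b" and minimal: "\<And>d. 0 < d \<Longrightarrow> d < k \<Longrightarrow> b ^ q ^ d \<noteq> b"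
    and "0 < k"
  shows "is_min_poly \<phi> b (min_poly \<phi> b)" "map_poly \<phi> (min_poly \<phi> b) = orbit_poly q k b"
proof -
  have "Polynomial.coeff (orbit_poly q k b) i \<in> range \<phi>" for i
    using arg_cong[OF orbit_poly_frobenius_fixed[OF frob period], of "\<lambda>p. Polynomial.coeff p i"]
    by (simp add: field_hom_range_eq_power_fixed_points[OF \<phi> card] coeff_map_poly
        field_hom.hom_zero[OF frob])
  then obtain M where M: "map_poly \<phi> M = orbit_poly q k b"
    using exists_map_poly_preimage[OF \<phi>] by blast
  then have "is_min_poly \<phi> b M"
    using is_min_poly_orbit_preimage[OF assms] by blast
  then show "is_min_poly \<phi> b (min_poly \<phi> b)" "map_poly \<phi> (min_poly \<phi> b) = orbit_poly q k b"
    by (simp_all add: min_poly_eqI M)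
qed

section \<open>The order of \<open>q\<close> modulo \<open>q\<^sup>m - 1\<close>\<close>

lemma not_cong_mult_power:
  fixes q e d m :: nat
  assumes "0 < e" "e * q ^ (m - 1) < q ^ m - 1" "0 < d" "d < m"
  shows "\<not> [e * q ^ d = e] (mod (q ^ m - 1))"
proof
  assume cong: "[e * q ^ d = e] (mod (q ^ m - 1))"
  have "q \<noteq> 0"
  proof
    assume "q = 0"
    with assms(3,4) have "q ^ m - 1 = 0"
      by (simp add: power_0_left)
    with assms(2) show False
      by simp
  qed
  moreover have "q \<noteq> 1"
    using assms(2) by auto
  ultimately have "q > 1"
    by linarith
  then have "1 < q ^ d"
    using assms(3) by (rule one_less_power)
  then have "e < e * q ^ d"
    using assms(1) by simp
  moreover have "q ^ d \<le> q ^ (m - 1)"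
    using \<open>q > 1\<close> assms(4) by (intro power_increasing) auto
  then have "e * q ^ d \<le> e * q ^ (m - 1)"
    by simp
  ultimately show False
    using cong assms(2) cong_less_modulus_unique_nat[OF cong] by linarith
qed

lemma ord_q_power_m_minus_1:
  fixes q m :: nat
  assumes "2 < q" "0 < m"
  shows "ord (q ^ m - 1) q = m"
proof -
  have "q ^ m = q * q ^ (m - 1)"
    using assms(2) by (simp add: power_eq_if)
  then have "3 * q ^ (m - 1) \<le> q ^ m"
    using assms(1) by simp
  moreover have "1 \<le> q ^ (m - 1)"
    using assms(1) by simp
  ultimately have bound: "1 * q ^ (m - 1) < q ^ m - 1"
    by linarith
  have "coprime (q ^ m - 1) (q ^ m)"
    using assms by (intro coprime_diff_one_left_nat) simp
  then have "0 < ord (q ^ m - 1) q"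
    using assms(2) by simp
  moreover have "[q ^ m = Suc 0] (mod (q ^ m - 1))"
    using assms by (subst cong_altdef_nat) (simp_all add: Suc_le_eq)
  then have "ord (q ^ m - 1) q dvd m"
    by (simp add: ord_divides')
  moreover have "\<not> [1 * q ^ d = 1] (mod (q ^ m - 1))" if "0 < d" "d < m" for d
    using not_cong_mult_power[OF _ bound that] by simp
  ultimately show ?thesis
    using ord[of q "q ^ m - 1"] dvd_imp_le[of "ord (q ^ m - 1) q" m] assms(2)
    by (metis mult_1 nat_less_le)
qed

section \<open>Codes of multiples of a polynomial\<close>

lemma multiples_mod_eq:
  fixes g w :: "'a::field poly"
  assumes "g \<noteq> 0" "w \<noteq> 0"
  shows "{(f * g) mod (g * w) | f. True} = {h * g | h. h = 0 \<or> degree h < degree w}"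
proof (intro equalityI subsetI)
  fix c
  assume "c \<in> {(f * g) mod (g * w) | f. True}"
  then obtain f where "c = (f * g) mod (w * g)"
    by (auto simp: mult.commute)
  then have "c = (f mod w) * g"
    by (simp add: mod_mult_mult2)
  then show "c \<in> {h * g | h. h = 0 \<or> degree h < degree w}"
    using degree_mod_less[OF assms(2)] by blast
next
  fix c
  assume "c \<in> {h * g | h. h = 0 \<or> degree h < degree w}"
  then obtain h where h: "c = h * g" "h = 0 \<or> degree h < degree w"
    by blast
  then have "(h * g) mod (g * w) = h * g"
    using assms by (cases "h = 0") (auto intro!: mod_poly_less simp: degree_mult_eq)
  with h show "c \<in> {(f * g) mod (g * w) | f. True}"
    by (metis (mono_tags, lifting) mem_Collect_eq)
qed

lemma poly_eq_sum_monom_lessThan: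
  "h = 0 \<or> degree h < k \<Longrightarrow> h = (\<Sum>i<k. Polynomial.monom (Polynomial.coeff h i) i)"
  by (intro poly_eqI) (auto simp: coeff_sum coeff_eq_0)

lemma coeff_sum_monom_lessThan: "j < k \<Longrightarrow> Polynomial.coeff (\<Sum>i<k. Polynomial.monom (u i) i) j = u j"
  by (simp add: coeff_sum)

lemma code_dim_low_degree_multiples:
  fixes g :: "'a::field poly"
  assumes "g \<noteq> 0"
  shows "code_dim {h * g | h. h = 0 \<or> degree h < k} = k"
proof -
  interpret vs: vector_space "Polynomial.smult :: 'a \<Rightarrow> 'a poly \<Rightarrow> 'a poly"
    by unfold_locales (simp_all add: smult_add_right smult_add_left)
  define C where "C = {h * g | h. h = 0 \<or> degree h < k}"
  define b where "b i = Polynomial.monom 1 i * g" for i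
  have "degree (b i) = i + degree g" for i
    using assms by (simp add: b_def degree_mult_eq degree_monom_eq)
  then have inj: "inj_on b {..<k}"
    by (metis inj_onI add_right_cancel)
  have sum_b: "(\<Sum>i<k. Polynomial.smult (u i) (b i)) = (\<Sum>i<k. Polynomial.monom (u i) i) * g" for u
    by (simp add: b_def sum_distrib_right smult_monom_mult)
  have "b ` {..<k} \<subseteq> C"
    by (auto simp: C_def b_def degree_monom_eq intro!: exI[of _ "Polynomial.monom 1 _"])
  moreover have "C \<subseteq> vs.span (b ` {..<k})"
  proof
    fix c
    assume "c \<in> C"
    then obtain h where h: "c = h * g" "h = 0 \<or> degree h < k"
      by (auto simp: C_def)
    then have "h = (\<Sum>i<k. Polynomial.monom (Polynomial.coeff h i) i)"
      by (intro poly_eq_sum_monom_lessThan)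
    then have "c = (\<Sum>i<k. Polynomial.smult (Polynomial.coeff h i) (b i))"
      by (simp add: sum_b h(1))
    then show "c \<in> vs.span (b ` {..<k})"
      by (auto intro: vs.span_sum vs.span_scale vs.span_base)
  qed
  moreover have "vs.independent (b ` {..<k})"
  proof (rule vs.independent_if_scalars_zero)
    fix u v
    assume "(\<Sum>x\<in>b ` {..<k}. Polynomial.smult (u x) x) = 0" "v \<in> b ` {..<k}"
    then obtain j where "j < k" "v = b j" "(\<Sum>i<k. Polynomial.monom (u (b i)) i) * g = 0"
      by (auto simp: sum.reindex[OF inj] sum_b)
    then show "u v = 0"
      using assms coeff_sum_monom_lessThan[OF \<open>j < k\<close>, of "\<lambda>i. u (b i)"] \<open>v = b j\<close> by simp
  qed simp
  moreover have "card (b ` {..<k}) = k"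
    by (simp add: card_image[OF inj])
  ultimately have "vs.dim C = k"
    by (rule vs.dim_unique)
  then show ?thesis
    by (simp add: code_dim_def C_def)
qed

lemma poly_eq_sum_over_support:
  fixes p :: "'a::comm_semiring_1 poly"
  assumes "finite S" "{i. Polynomial.coeff p i \<noteq> 0} \<subseteq> S"
  shows "poly p x = (\<Sum>i\<in>S. Polynomial.coeff p i * x ^ i)"
proof -
  have "poly p x = (\<Sum>i\<le>degree p. Polynomial.coeff p i * x ^ i)"
    by (rule poly_altdef)
  also have "\<dots> = (\<Sum>i\<in>S \<union> {..degree p}. Polynomial.coeff p i * x ^ i)"
    by (rule sum.mono_neutral_left) (use assms in \<open>auto simp: coeff_eq_0\<close>)
  also have "\<dots> = (\<Sum>i\<in>S. Polynomial.coeff p i * x ^ i)"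
    by (rule sum.mono_neutral_right) (use assms in force)+
  finally show ?thesis .
qed

lemma poly_map_poly_eq_sum_over_support:
  assumes "field_hom \<phi>"
  shows "poly (map_poly \<phi> c) x = (\<Sum>i | Polynomial.coeff c i \<noteq> 0. \<phi> (Polynomial.coeff c i) * x ^ i)"
proof -
  interpret field_hom \<phi> by fact
  have "finite {i. Polynomial.coeff c i \<noteq> 0}"
    by (rule finite_subset[of _ "{..degree c}"]) (auto simp: le_degree)
  then show ?thesis
    using poly_eq_sum_over_support[of _ "map_poly \<phi> c"] by (simp add: coeff_map_poly)
qed

lemma binomial_roots_imp_square_powers_eq:
  fixes a b \<beta> :: "'b::field"
  assumes "a \<noteq> 0" "\<beta> \<noteq> 0"
    and "a * \<beta> ^ i + b * \<beta> ^ j = 0" "a * (\<beta> ^ 3) ^ i + b * (\<beta> ^ 3) ^ j = 0"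
  shows "\<beta> ^ (2 * i) = \<beta> ^ (2 * j)"
proof -
  have "(\<beta> ^ 3) ^ k = \<beta> ^ k * \<beta> ^ (2 * k)" for k
    by (simp flip: power_mult power_add)
  with assms(4) have "a * \<beta> ^ i * \<beta> ^ (2 * i) + b * \<beta> ^ j * \<beta> ^ (2 * j) = 0"
    by (simp add: mult.assoc)
  with assms(3) have "a * \<beta> ^ i * (\<beta> ^ (2 * i) - \<beta> ^ (2 * j)) = 0"
    by (simp add: algebra_simps eq_neg_iff_add_eq_0 [symmetric])
  with assms(1,2) show ?thesis
    by simp
qed

lemma hamming_weight_ge_3_if_roots:
  fixes \<phi> :: "'a::field \<Rightarrow> 'b::field"
  assumes \<phi>: "field_hom \<phi>" and "c \<noteq> 0" "degree c < n" "\<beta> \<noteq> 0"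
    and root1: "poly (map_poly \<phi> c) \<beta> = 0" and root3: "poly (map_poly \<phi> c) (\<beta> ^ 3) = 0"
    and squares_inj: "inj_on (\<lambda>i. \<beta> ^ (2 * i)) {..<n}"
  shows "3 \<le> hamming_weight c"
proof (rule ccontr)
  interpret field_hom \<phi> by fact
  define S where "S = {i. Polynomial.coeff c i \<noteq> 0}"
  have "S \<subseteq> {..<n}"
    using \<open>degree c < n\<close> le_degree by (fastforce simp: S_def)
  then have "finite S"
    by (rule finite_subset) simp
  have "S \<noteq> {}"
    using \<open>c \<noteq> 0\<close> by (auto simp: S_def poly_eq_iff)
  have eval: "poly (map_poly \<phi> c) x = (\<Sum>i\<in>S. \<phi> (Polynomial.coeff c i) * x ^ i)" for x
    unfolding S_def by (rule poly_map_poly_eq_sum_over_support[OF \<phi>])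
  assume "\<not> 3 \<le> hamming_weight c"
  then have "card S < 3"
    by (simp add: hamming_weight_def S_def)
  moreover have "0 < card S"
    using \<open>finite S\<close> \<open>S \<noteq> {}\<close> by (simp add: card_gt_0_iff)
  ultimately have "card S = 1 \<or> card S = 2"
    by presburger
  then show False
  proof
    assume "card S = 1"
    then obtain i where "S = {i}"
      by (auto simp: card_1_singleton_iff)
    moreover have "Polynomial.coeff c i \<noteq> 0"
      using \<open>S = {i}\<close> by (auto simp: S_def)
    ultimately show False
      using root1 eval[of \<beta>] \<open>\<beta> \<noteq> 0\<close> by simp
  next
    assume "card S = 2"
    then obtain i j where S: "S = {i, j}" "i \<noteq> j"
      by (auto simp: card_2_iff)
    have "\<phi> (Polynomial.coeff c i) \<noteq> 0"
      using S by (auto simp: S_def)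
    then have "\<beta> ^ (2 * i) = \<beta> ^ (2 * j)"
      using root1 root3 eval[of \<beta>] eval[of "\<beta> ^ 3"] S \<open>\<beta> \<noteq> 0\<close>
      by (intro binomial_roots_imp_square_powers_eq) auto
    with squares_inj \<open>S \<subseteq> {..<n}\<close> S show False
      by (auto dest: inj_onD)
  qed
qed

lemma exists_weight_3_with_roots:
  fixes \<phi> :: "'a::field \<Rightarrow> 'b::field"
  assumes \<phi>: "field_hom \<phi>"
    and nonzero: "t\<^sub>1 \<noteq> 0" "t\<^sub>2 \<noteq> 0" "t\<^sub>3 \<noteq> 0"
    and squares: "t\<^sub>1 ^ 2 \<noteq> t\<^sub>2 ^ 2" "t\<^sub>1 ^ 2 \<noteq> t\<^sub>3 ^ 2" "t\<^sub>2 ^ 2 \<noteq> t\<^sub>3 ^ 2"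
    and powers: "\<phi> t\<^sub>1 = \<beta> ^ i\<^sub>1" "\<phi> t\<^sub>2 = \<beta> ^ i\<^sub>2" "\<phi> t\<^sub>3 = \<beta> ^ i\<^sub>3"
  shows "\<exists>c. {i. Polynomial.coeff c i \<noteq> 0} = {i\<^sub>1, i\<^sub>2, i\<^sub>3} \<and> hamming_weight c = 3 \<and>
    poly (map_poly \<phi> c) \<beta> = 0 \<and> poly (map_poly \<phi> c) (\<beta> ^ 3) = 0"
proof -
  interpret field_hom \<phi> by fact
  have distinct: "i\<^sub>1 \<noteq> i\<^sub>2" "i\<^sub>1 \<noteq> i\<^sub>3" "i\<^sub>2 \<noteq> i\<^sub>3"
    using squares powers inj by (metis injD)+
  \<comment> \<open>With \<open>c\<^sub>k t\<^sub>k\<close> the cyclic differences of the squares, both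
      \<open>\<Sum> c\<^sub>k t\<^sub>k\<close> and \<open>\<Sum> c\<^sub>k t\<^sub>k\<^sup>3\<close> vanish.\<close>
  define c\<^sub>1 c\<^sub>2 c\<^sub>3 where "c\<^sub>1 = (t\<^sub>2 ^ 2 - t\<^sub>3 ^ 2) / t\<^sub>1"
    and "c\<^sub>2 = (t\<^sub>3 ^ 2 - t\<^sub>1 ^ 2) / t\<^sub>2" and "c\<^sub>3 = (t\<^sub>1 ^ 2 - t\<^sub>2 ^ 2) / t\<^sub>3"
  define c where "c = Polynomial.monom c\<^sub>1 i\<^sub>1 + Polynomial.monom c\<^sub>2 i\<^sub>2 + Polynomial.monom c\<^sub>3 i\<^sub>3"
  have "c\<^sub>1 \<noteq> 0" "c\<^sub>2 \<noteq> 0" "c\<^sub>3 \<noteq> 0"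
    using nonzero squares by (simp_all add: c\<^sub>1_def c\<^sub>2_def c\<^sub>3_def)
  then have support: "{i. Polynomial.coeff c i \<noteq> 0} = {i\<^sub>1, i\<^sub>2, i\<^sub>3}"
    using distinct by (auto simp: c_def coeff_monom)
  have eval: "poly (map_poly \<phi> c) x = \<phi> c\<^sub>1 * x ^ i\<^sub>1 + \<phi> c\<^sub>2 * x ^ i\<^sub>2 + \<phi> c\<^sub>3 * x ^ i\<^sub>3" for x
    by (simp add: c_def map_poly_add map_poly_monom poly_monom)
  have products: "c\<^sub>1 * t\<^sub>1 = t\<^sub>2 ^ 2 - t\<^sub>3 ^ 2" "c\<^sub>2 * t\<^sub>2 = t\<^sub>3 ^ 2 - t\<^sub>1 ^ 2"
    "c\<^sub>3 * t\<^sub>3 = t\<^sub>1 ^ 2 - t\<^sub>2 ^ 2"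
    using nonzero by (simp_all add: c\<^sub>1_def c\<^sub>2_def c\<^sub>3_def)
  then have "c\<^sub>1 * t\<^sub>1 + c\<^sub>2 * t\<^sub>2 + c\<^sub>3 * t\<^sub>3 = 0"
    by simp
  then have root1: "poly (map_poly \<phi> c) \<beta> = 0"
    by (simp add: eval flip: powers hom_mult hom_add)
  have cube: "\<And>c t :: 'a. c * t ^ 3 = (c * t) * t ^ 2"
    by (simp add: power2_eq_square power3_eq_cube)
  have "c\<^sub>1 * t\<^sub>1 ^ 3 + c\<^sub>2 * t\<^sub>2 ^ 3 + c\<^sub>3 * t\<^sub>3 ^ 3 = 0"
    by (simp only: cube products) (simp add: algebra_simps)
  then have root3: "poly (map_poly \<phi> c) (\<beta> ^ 3) = 0"
    by (simp add: eval power_mult [symmetric] mult.commute [of 3] power_mult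
        flip: powers hom_power hom_mult hom_add)
  show ?thesis
    using support root1 root3 distinct by (auto simp: hamming_weight_def)
qed

lemma exists_nonzero_square_notin:
  fixes U :: "'a::{finite,field} set"
  assumes "2 * card U + 1 < card (UNIV :: 'a set)"
  shows "\<exists>x. x \<noteq> 0 \<and> x ^ 2 \<notin> U"
proof (rule ccontr)
  define P where "P = (\<Prod>u\<in>U. [:- u, 0, 1:])"
  have "P \<noteq> 0"
    by (simp add: P_def)
  have "degree P = 2 * card U"
    unfolding P_def by (subst degree_prod_sum_eq) auto
  assume "\<not> ?thesis"
  then have "UNIV - {0} \<subseteq> {x. poly P x = 0}"
    by (force simp: P_def poly_prod power2_eq_square)
  then have "card (UNIV - {0 :: 'a}) \<le> card {x. poly P x = 0}"
    by (intro card_mono) auto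
  also have "\<dots> \<le> 2 * card U"
    using card_poly_roots_bound[OF \<open>P \<noteq> 0\<close>] \<open>degree P = 2 * card U\<close> by simp
  finally show False
    using assms by (simp add: card_Diff_singleton)
qed

lemma obtain_three_distinct_squares:
  assumes "7 \<le> card (UNIV :: 'a set)"
  obtains t\<^sub>1 t\<^sub>2 t\<^sub>3 :: "'a::{finite,field}"
  where "t\<^sub>1 \<noteq> 0" "t\<^sub>2 \<noteq> 0" "t\<^sub>3 \<noteq> 0"
    and "t\<^sub>1 ^ 2 \<noteq> t\<^sub>2 ^ 2" "t\<^sub>1 ^ 2 \<noteq> t\<^sub>3 ^ 2" "t\<^sub>2 ^ 2 \<noteq> t\<^sub>3 ^ 2"
proof -
  have "\<exists>t. t \<noteq> 0 \<and> t ^ 2 \<notin> ({} :: 'a set)"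
    using assms by (intro exists_nonzero_square_notin) simp
  then obtain t\<^sub>1 :: 'a where "t\<^sub>1 \<noteq> 0"
    by blast
  have "\<exists>t. t \<noteq> 0 \<and> t ^ 2 \<notin> {t\<^sub>1 ^ 2}"
    using assms by (intro exists_nonzero_square_notin) simp
  then obtain t\<^sub>2 :: 'a where "t\<^sub>2 \<noteq> 0" "t\<^sub>1 ^ 2 \<noteq> t\<^sub>2 ^ 2"
    by auto
  have "card {t\<^sub>1 ^ 2, t\<^sub>2 ^ 2} \<le> 2"
    by (simp add: card_insert_le_m1)
  then have "\<exists>t. t \<noteq> 0 \<and> t ^ 2 \<notin> {t\<^sub>1 ^ 2, t\<^sub>2 ^ 2}"
    using assms by (intro exists_nonzero_square_notin) simp
  then obtain t\<^sub>3 :: 'a where "t\<^sub>3 \<noteq> 0" "t\<^sub>1 ^ 2 \<noteq> t\<^sub>3 ^ 2" "t\<^sub>2 ^ 2 \<noteq> t\<^sub>3 ^ 2"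
    by auto
  show ?thesis
    by (rule that) fact+
qed

lemma degree_monom_plus_one: "0 < n \<Longrightarrow> degree (Polynomial.monom 1 n + 1 :: 'a::field poly) = n"
  by (simp add: degree_add_eq_left degree_monom_eq)

lemma almost_dist_opt_sphere_packing_3:
  fixes q m n :: nat
  assumes "7 \<le> q" "0 < m" "2 * n + 1 = q ^ m" "2 * m \<le> n"
  shows "almost_dist_opt_sphere_packing q n (n - 2 * m) 3"
  unfolding almost_dist_opt_sphere_packing_def sphere_packing_bound_holds_def
proof (intro allI impI; rule ccontr)
  fix d
  assume bound: "q ^ (n - 2 * m) * (\<Sum>i\<le>(d - 1) div 2. (n choose i) * (q - 1) ^ i) \<le> q ^ n"
    and "\<not> d \<le> 3 + 1"
  then have "(n choose 2) * (q - 1) ^ 2 \<le> (\<Sum>i\<le>(d - 1) div 2. (n choose i) * (q - 1) ^ i)"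
    by (intro member_le_sum) auto
  then have "q ^ (n - 2 * m) * ((n choose 2) * (q - 1) ^ 2) \<le> q ^ n"
    using bound by (meson le_trans mult_le_mono2)
  also have "q ^ n = q ^ (n - 2 * m) * (q ^ m) ^ 2"
    using assms(4) by (simp add: power_add [symmetric] power_mult [symmetric] mult.commute)
  finally have "(n choose 2) * (q - 1) ^ 2 \<le> (2 * n + 1) ^ 2"
    using assms(1,3) by simp
  define r where "r = n - 2"
  have n: "n = Suc (Suc r)"
    using assms(2,4) unfolding r_def by linarith
  have "2 * (n choose 2) = n * (n - 1)"
    using binomial_absorption[of 1 "Suc r"] by (simp add: n numeral_2_eq_2)
  then have "18 * (n * (n - 1)) = (n choose 2) * 36"
    by simp
  also have "\<dots> \<le> (n choose 2) * (q - 1) ^ 2"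
    using assms(1) power_mono[of 6 "q - 1" 2] by simp
  also have "\<dots> \<le> (2 * n + 1) ^ 2"
    by fact
  finally show False
    by (simp add: n power2_eq_square algebra_simps)
qed

section \<open>The negacyclic BCH code\<close>

locale negacyclic_bch =
  fixes \<phi> :: "'a::{finite,field_gcd} \<Rightarrow> 'b::{finite,field}"
    and q m n :: nat and \<alpha> :: 'b
  assumes embedding: "field_hom \<phi>"
    and card_base: "card (UNIV :: 'a set) = q"
    and prime_power: "\<exists>p k. prime p \<and> 0 < k \<and> q = p ^ k"
    and q_ge_7: "7 \<le> q"
    and m_pos: "0 < m"
    and card_ext: "card (UNIV :: 'b set) = q ^ m"
    and length_eq: "2 * n + 1 = q ^ m"
    and primitive: "primitive_element \<alpha>"
begin

interpretation field_hom \<phi>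
  by (rule embedding)

lemma three_q_power_less: "3 * q ^ (m - 1) < q ^ m - 1"
proof -
  have "q ^ m = q * q ^ (m - 1)"
    using m_pos by (simp add: power_eq_if)
  then have "7 * q ^ (m - 1) \<le> q ^ m"
    using q_ge_7 by simp
  moreover have "1 \<le> q ^ (m - 1)"
    using q_ge_7 by simp
  ultimately show ?thesis
    by linarith
qed

lemma q_power_m_minus_1: "q ^ m - 1 = 2 * n"
  using length_eq by simp

lemma n_ge_3: "3 \<le> n"
  using self_le_power[of q m] m_pos q_ge_7 length_eq by simp

lemma alpha_power_eq_iff: "\<alpha> ^ i = \<alpha> ^ j \<longleftrightarrow> [i = j] (mod 2 * n)"
  using primitive_element_power_eq_iff[OF primitive, of i j] unfolding card_ext q_power_m_minus_1 .

lemma q_power_m_cong_1: "[q ^ m = 1] (mod 2 * n)"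
  unfolding length_eq [symmetric] cong_def by (simp only: mod_add_self1)

lemma alpha_power_n: "\<alpha> ^ n = - 1"
proof -
  have "(\<alpha> ^ n) ^ 2 = \<alpha> ^ (2 * n)"
    by (simp add: power_mult [symmetric] mult.commute)
  also have "\<dots> = \<alpha> ^ 0"
    unfolding alpha_power_eq_iff by (simp add: cong_def)
  moreover have "\<alpha> ^ n \<noteq> \<alpha> ^ 0"
    unfolding alpha_power_eq_iff using n_ge_3 by (simp add: cong_def)
  ultimately show ?thesis
    by (simp add: power2_eq_1_iff)
qed

lemma frobenius_hom: "field_hom (\<lambda>y::'b. y ^ q)"
proof -
  obtain p k where "prime p" "0 < k" "q = p ^ k"
    using prime_power by blast
  then have "CHAR('a) = p"
    using CHAR_eq_of_card_prime_power card_base by blast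
  with \<open>prime p\<close> \<open>q = p ^ k\<close> show ?thesis
    by (intro frobenius_field_hom[where k = k]) (simp_all add: CHAR_eq)
qed

lemma min_poly_alpha_power:
  assumes "e \<in> {1, 3}"
  shows "is_min_poly \<phi> (\<alpha> ^ e) (min_poly \<phi> (\<alpha> ^ e))"
    and "map_poly \<phi> (min_poly \<phi> (\<alpha> ^ e)) = orbit_poly q m (\<alpha> ^ e)"
proof -
  have "0 < e" "e * q ^ (m - 1) < q ^ m - 1"
    using assms three_q_power_less by auto
  have period: "(\<alpha> ^ e) ^ q ^ m = \<alpha> ^ e"
    using cong_scalar_left[OF q_power_m_cong_1, of e]
    by (simp add: alpha_power_eq_iff power_mult [symmetric])
  have minimal: "(\<alpha> ^ e) ^ q ^ d \<noteq> \<alpha> ^ e" if "0 < d" "d < m" for d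
    using not_cong_mult_power[OF \<open>0 < e\<close> \<open>e * q ^ (m - 1) < q ^ m - 1\<close> that]
    unfolding q_power_m_minus_1 by (simp add: alpha_power_eq_iff power_mult [symmetric])
  show "is_min_poly \<phi> (\<alpha> ^ e) (min_poly \<phi> (\<alpha> ^ e))"
    and "map_poly \<phi> (min_poly \<phi> (\<alpha> ^ e)) = orbit_poly q m (\<alpha> ^ e)"
    using min_poly_orbit[OF embedding frobenius_hom card_base period minimal m_pos] by auto
qed

lemma three_mult_power_not_cong_1:
  assumes "i < m"
  shows "\<not> [3 * q ^ i = 1] (mod 2 * n)"
proof
  assume cong: "[3 * q ^ i = 1] (mod 2 * n)"
  show False
  proof (cases "i = 0")
    case True
    with cong n_ge_3 show False
      using cong_less_modulus_unique_nat[of 3 1 "2 * n"] by simp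
  next
    case False
    have "[3 * q ^ i * q ^ (m - i) = 1 * q ^ (m - i)] (mod 2 * n)"
      using cong by (rule cong_scalar_right)
    moreover have "3 * q ^ i * q ^ (m - i) = 3 * q ^ m"
      using assms by (simp flip: power_add)
    moreover have "[3 * q ^ m = 3 * 1] (mod 2 * n)"
      by (rule cong_scalar_left[OF q_power_m_cong_1])
    ultimately have "[q ^ (m - i) = 3] (mod 2 * n)"
      by (metis cong_sym cong_trans mult_1 mult_1_right)
    moreover have "q ^ (m - i) \<le> q ^ (m - 1)"
      using False q_ge_7 by (intro power_increasing) auto
    then have "q ^ (m - i) < 2 * n" "3 < 2 * n"
      using three_q_power_less length_eq n_ge_3 by linarith+
    moreover have "q \<le> q ^ (m - i)"
      using assms q_ge_7 by (intro self_le_power) auto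
    ultimately show False
      using cong_less_modulus_unique_nat q_ge_7 by fastforce
  qed
qed

lemma alpha_not_root_of_min_poly_cube: "poly (map_poly \<phi> (min_poly \<phi> (\<alpha> ^ 3))) \<alpha> \<noteq> 0"
proof -
  have "\<alpha> \<noteq> (\<alpha> ^ 3) ^ q ^ i" if "i < m" for i
    using three_mult_power_not_cong_1[OF that] alpha_power_eq_iff[of 1 "3 * q ^ i"]
    by (simp add: power_mult [symmetric] cong_sym_eq)
  then show ?thesis
    by (simp add: min_poly_alpha_power(2) poly_orbit_poly)
qed

definition generator :: "'a poly" where
  "generator = min_poly \<phi> \<alpha> * min_poly \<phi> (\<alpha> ^ 3)"

lemma min_poly_alpha: "is_min_poly \<phi> \<alpha> (min_poly \<phi> \<alpha>)" "degree (min_poly \<phi> \<alpha>) = m"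
  using min_poly_alpha_power[of 1] by (simp_all flip: degree_map_poly_eq add: degree_orbit_poly)

lemma min_poly_alpha_cube: "is_min_poly \<phi> (\<alpha> ^ 3) (min_poly \<phi> (\<alpha> ^ 3))"
    "degree (min_poly \<phi> (\<alpha> ^ 3)) = m"
  using min_poly_alpha_power[of 3] by (simp_all flip: degree_map_poly_eq add: degree_orbit_poly)

lemma coprime_min_polys: "coprime (min_poly \<phi> \<alpha>) (min_poly \<phi> (\<alpha> ^ 3))"
  by (rule is_min_poly_coprime[OF embedding min_poly_alpha(1) alpha_not_root_of_min_poly_cube])

lemma lcm_min_polys: "lcm (min_poly \<phi> \<alpha>) (min_poly \<phi> (\<alpha> ^ 3)) = generator"
proof -
  have "lead_coeff generator = 1"
    using min_poly_alpha(1) min_poly_alpha_cube(1)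
    by (simp add: generator_def lead_coeff_mult is_min_poly_def)
  then show ?thesis
    by (simp add: lcm_coprime[OF coprime_min_polys] generator_def [symmetric]
        normalize_poly_eq_map_poly map_poly_idI)
qed

lemma degree_generator: "degree generator = 2 * m"
  using min_poly_alpha min_poly_alpha_cube
  by (simp add: generator_def degree_mult_eq is_min_poly_def flip: leading_coeff_0_iff)

lemma generator_dvd_iff:
  "generator dvd c \<longleftrightarrow> poly (map_poly \<phi> c) \<alpha> = 0 \<and> poly (map_poly \<phi> c) (\<alpha> ^ 3) = 0"
proof
  assume "generator dvd c"
  then show "poly (map_poly \<phi> c) \<alpha> = 0 \<and> poly (map_poly \<phi> c) (\<alpha> ^ 3) = 0"
    using min_poly_alpha(1) min_poly_alpha_cube(1)
    by (auto simp: generator_def map_poly_mult is_min_poly_def elim!: dvdE)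
next
  assume "poly (map_poly \<phi> c) \<alpha> = 0 \<and> poly (map_poly \<phi> c) (\<alpha> ^ 3) = 0"
  then have "min_poly \<phi> \<alpha> dvd c" "min_poly \<phi> (\<alpha> ^ 3) dvd c"
    using min_poly_alpha(1) min_poly_alpha_cube(1) by (auto simp: is_min_poly_def)
  then show "generator dvd c"
    unfolding generator_def using coprime_min_polys by (rule divides_mult)
qed

lemma generator_dvd_negacyclic: "generator dvd Polynomial.monom 1 n + 1"
  by (simp add: generator_dvd_iff map_poly_add map_poly_monom poly_monom alpha_power_n hom_one
      power_mult [symmetric] mult.commute [of 3] power_mult)

lemma degree_negacyclic_modulus: "degree (Polynomial.monom 1 n + 1 :: 'a poly) = n"
  using n_ge_3 by (simp add: degree_monom_plus_one)

lemma two_m_le_n: "2 * m \<le> n"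
proof -
  have "Polynomial.monom 1 n + 1 \<noteq> (0 :: 'a poly)"
    using degree_negacyclic_modulus n_ge_3 by auto
  then show ?thesis
    using dvd_imp_degree_le[OF generator_dvd_negacyclic] degree_generator degree_negacyclic_modulus
    by simp
qed

lemma generator_nonzero: "generator \<noteq> 0"
  using degree_generator m_pos by auto

lemma negacyclic_code_eq:
  "negacyclic_code n generator = {h * generator | h. h = 0 \<or> degree h < n - 2 * m}"
proof -
  obtain w where w: "Polynomial.monom 1 n + 1 = generator * w"
    using generator_dvd_negacyclic by blast
  then have "w \<noteq> 0"
    using degree_negacyclic_modulus n_ge_3 by auto
  with w have "degree w = n - 2 * m"
    using degree_negacyclic_modulus generator_nonzero degree_generator by (simp add: degree_mult_eq)
  then show ?thesis
    by (simp only: negacyclic_code_def w multiples_mod_eq[OF generator_nonzero \<open>w \<noteq> 0\<close>])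
qed

lemma mem_negacyclic_code_iff:
  "c \<in> negacyclic_code n generator \<longleftrightarrow> generator dvd c \<and> (c = 0 \<or> degree c < n)"
proof
  assume "c \<in> negacyclic_code n generator"
  then obtain h where "c = h * generator" "h = 0 \<or> degree h < n - 2 * m"
    by (auto simp: negacyclic_code_eq)
  then show "generator dvd c \<and> (c = 0 \<or> degree c < n)"
    using two_m_le_n generator_nonzero degree_generator by (cases "h = 0") (auto simp: degree_mult_eq)
next
  assume "generator dvd c \<and> (c = 0 \<or> degree c < n)"
  moreover from this obtain h where "c = h * generator"
    by (metis dvd_def mult.commute)
  ultimately have "c = h * generator" "c = 0 \<or> degree c < n"
    by simp_all
  then have "h = 0 \<or> degree h < n - 2 * m"
    using generator_nonzero degree_generator by (cases "h = 0") (auto simp: degree_mult_eq)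
  with \<open>c = h * generator\<close> show "c \<in> negacyclic_code n generator"
    by (auto simp: negacyclic_code_eq)
qed

lemma code_dim_negacyclic_code: "code_dim (negacyclic_code n generator) = n - 2 * m"
  by (simp add: negacyclic_code_eq code_dim_low_degree_multiples generator_nonzero)

lemma hamming_weight_codeword_ge_3:
  assumes "c \<in> negacyclic_code n generator" "c \<noteq> 0"
  shows "3 \<le> hamming_weight c"
proof (rule hamming_weight_ge_3_if_roots[OF embedding \<open>c \<noteq> 0\<close>])
  show "degree c < n" "poly (map_poly \<phi> c) \<alpha> = 0" "poly (map_poly \<phi> c) (\<alpha> ^ 3) = 0"
    using assms by (simp_all add: mem_negacyclic_code_iff generator_dvd_iff)
  show "\<alpha> \<noteq> 0"
    using alpha_power_n n_ge_3 by (auto simp: power_0_left)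
  show "inj_on (\<lambda>i. \<alpha> ^ (2 * i)) {..<n}"
    by (rule inj_onI) (simp add: alpha_power_eq_iff cong_def)
qed

lemma exists_power_representative:
  assumes "s \<noteq> 0"
  shows "\<exists>i t. i < n \<and> \<phi> t = \<alpha> ^ i \<and> t ^ 2 = s ^ 2"
proof -
  have "\<phi> s \<in> UNIV - {0}"
    using assms by simp
  then obtain k where "\<phi> s = \<alpha> ^ k"
    using primitive unfolding primitive_element_def by blast
  then have k: "\<phi> s = \<alpha> ^ (k mod (2 * n))"
    by (simp add: alpha_power_eq_iff cong_def)
  show ?thesis
  proof (cases "k mod (2 * n) < n")
    case True
    with k show ?thesis
      by blast
  next
    case False
    define i where "i = k mod (2 * n) - n"
    have "k mod (2 * n) < 2 * n"
      using n_ge_3 by simp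
    then have "i < n"
      unfolding i_def by linarith
    have "\<phi> s = \<alpha> ^ i * \<alpha> ^ n"
      using False k by (simp add: i_def flip: power_add)
    then have "\<phi> (- s) = \<alpha> ^ i"
      by (simp add: hom_uminus alpha_power_n)
    with \<open>i < n\<close> show ?thesis
      by (intro exI[of _ i] exI[of _ "- s"]) simp
  qed
qed

lemma obtain_powers_with_distinct_squares:
  obtains i\<^sub>1 i\<^sub>2 i\<^sub>3 t\<^sub>1 t\<^sub>2 t\<^sub>3
  where "i\<^sub>1 < n" "i\<^sub>2 < n" "i\<^sub>3 < n"
    and "\<phi> t\<^sub>1 = \<alpha> ^ i\<^sub>1" "\<phi> t\<^sub>2 = \<alpha> ^ i\<^sub>2" "\<phi> t\<^sub>3 = \<alpha> ^ i\<^sub>3"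
    and "t\<^sub>1 \<noteq> 0" "t\<^sub>2 \<noteq> 0" "t\<^sub>3 \<noteq> 0"
    and "t\<^sub>1 ^ 2 \<noteq> t\<^sub>2 ^ 2" "t\<^sub>1 ^ 2 \<noteq> t\<^sub>3 ^ 2" "t\<^sub>2 ^ 2 \<noteq> t\<^sub>3 ^ 2"
proof -
  have "7 \<le> card (UNIV :: 'a set)"
    using card_base q_ge_7 by simp
  then obtain s\<^sub>1 s\<^sub>2 s\<^sub>3 :: 'a
    where s: "s\<^sub>1 \<noteq> 0" "s\<^sub>2 \<noteq> 0" "s\<^sub>3 \<noteq> 0"
      "s\<^sub>1 ^ 2 \<noteq> s\<^sub>2 ^ 2" "s\<^sub>1 ^ 2 \<noteq> s\<^sub>3 ^ 2" "s\<^sub>2 ^ 2 \<noteq> s\<^sub>3 ^ 2"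
    by (rule obtain_three_distinct_squares)
  obtain i\<^sub>1 i\<^sub>2 i\<^sub>3 t\<^sub>1 t\<^sub>2 t\<^sub>3
    where t: "i\<^sub>1 < n" "\<phi> t\<^sub>1 = \<alpha> ^ i\<^sub>1" "t\<^sub>1 ^ 2 = s\<^sub>1 ^ 2"
      "i\<^sub>2 < n" "\<phi> t\<^sub>2 = \<alpha> ^ i\<^sub>2" "t\<^sub>2 ^ 2 = s\<^sub>2 ^ 2"
      "i\<^sub>3 < n" "\<phi> t\<^sub>3 = \<alpha> ^ i\<^sub>3" "t\<^sub>3 ^ 2 = s\<^sub>3 ^ 2"
    using exists_power_representative[OF s(1)] exists_power_representative[OF s(2)]
      exists_power_representative[OF s(3)] by meson
  show ?thesis
    by (rule that[OF t(1,4,7,2,5,8)]) (use s t in auto)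
qed

lemma exists_weight_3_codeword: "\<exists>c \<in> negacyclic_code n generator. c \<noteq> 0 \<and> hamming_weight c = 3"
proof -
  obtain i\<^sub>1 i\<^sub>2 i\<^sub>3 t\<^sub>1 t\<^sub>2 t\<^sub>3
    where i: "i\<^sub>1 < n" "i\<^sub>2 < n" "i\<^sub>3 < n"
      and t: "\<phi> t\<^sub>1 = \<alpha> ^ i\<^sub>1" "\<phi> t\<^sub>2 = \<alpha> ^ i\<^sub>2" "\<phi> t\<^sub>3 = \<alpha> ^ i\<^sub>3"
      "t\<^sub>1 \<noteq> 0" "t\<^sub>2 \<noteq> 0" "t\<^sub>3 \<noteq> 0"
      "t\<^sub>1 ^ 2 \<noteq> t\<^sub>2 ^ 2" "t\<^sub>1 ^ 2 \<noteq> t\<^sub>3 ^ 2" "t\<^sub>2 ^ 2 \<noteq> t\<^sub>3 ^ 2"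
    by (rule obtain_powers_with_distinct_squares)
  from exists_weight_3_with_roots[OF embedding t(4-9) t(1-3)]
  obtain c where c: "{i. Polynomial.coeff c i \<noteq> 0} = {i\<^sub>1, i\<^sub>2, i\<^sub>3}" "hamming_weight c = 3"
      "poly (map_poly \<phi> c) \<alpha> = 0" "poly (map_poly \<phi> c) (\<alpha> ^ 3) = 0"
    by blast
  have "c \<noteq> 0"
  proof
    assume "c = 0"
    with c(1) show False
      by simp
  qed
  then have "degree c \<in> {i\<^sub>1, i\<^sub>2, i\<^sub>3}"
    using c(1) leading_coeff_0_iff by blast
  with \<open>c \<noteq> 0\<close> i have "c \<in> negacyclic_code n generator"
    using c(3,4) by (auto simp: mem_negacyclic_code_iff generator_dvd_iff)
  with \<open>c \<noteq> 0\<close> c(2) show ?thesis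
    by blast
qed

lemma min_distance_negacyclic_code: "min_distance (negacyclic_code n generator) = 3"
  unfolding min_distance_def
proof (rule cInf_eq_minimum)
  show "3 \<in> {hamming_weight c |c. c \<in> negacyclic_code n generator \<and> c \<noteq> 0}"
    using exists_weight_3_codeword by auto
qed (auto intro: hamming_weight_codeword_ge_3)

lemma almost_dist_opt_negacyclic_code: "almost_dist_opt_sphere_packing q n (n - 2 * m) 3"
  using almost_dist_opt_sphere_packing_3[OF q_ge_7 m_pos length_eq two_m_le_n] .

end

theorem theorem39:
  fixes \<phi> :: "'a::{finite,field_gcd} \<Rightarrow> 'b::{finite,field}"
    and q m n l :: nat and \<alpha> \<beta> :: 'b
  assumes "q = card (UNIV :: 'a set)"
    and "\<exists>p k. prime p \<and> k > 0 \<and> q = p ^ k"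
    and "odd q" and "q \<ge> 7" and "m \<ge> 2"
    and "n = (q ^ m - 1) div 2"
    and "l = ord (2 * n) q"
    and "card (UNIV :: 'b set) = q ^ l"
    and "field_embedding \<phi>"
    and "primitive_element \<alpha>"
    and "\<beta> = \<alpha> ^ ((q ^ l - 1) div (2 * n))"
  shows "lcm (min_poly \<phi> \<beta>) (min_poly \<phi> (\<beta> ^ 3)) = min_poly \<phi> \<beta> * min_poly \<phi> (\<beta> ^ 3)
    \<and> code_dim (negacyclic_code n (lcm (min_poly \<phi> \<beta>) (min_poly \<phi> (\<beta> ^ 3)))) = n - 2 * m
    \<and> min_distance (negacyclic_code n (lcm (min_poly \<phi> \<beta>) (min_poly \<phi> (\<beta> ^ 3)))) = 3
    \<and> almost_dist_opt_sphere_packing q n (n - 2 * m) 3"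
proof -
  have length_eq: "2 * n + 1 = q ^ m"
    using assms(3,6) by (simp add: odd_pos)
  then have modulus: "2 * n = q ^ m - 1"
    by simp
  then have "l = m"
    using assms(4,5,7) ord_q_power_m_minus_1[of q m] by simp
  moreover have "q \<le> q ^ m"
    using assms(4,5) by (simp add: self_le_power)
  ultimately have "(q ^ l - 1) div (2 * n) = 1"
    using assms(4) modulus by simp
  then have "\<beta> = \<alpha>"
    using assms(11) by simp
  interpret negacyclic_bch \<phi> q m n \<alpha>
    by (rule negacyclic_bch.intro)
      (use assms length_eq \<open>l = m\<close> field_embedding_imp_field_hom in auto)
  show ?thesis
    using lcm_min_polys code_dim_negacyclic_code min_distance_negacyclic_code almost_dist_opt_negacyclic_code
    by (simp add: \<open>\<beta> = \<alpha>\<close> generator_def)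
qed

end
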